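(* Let $A$ be a finite set of alternatives with $|A|\ge 3$, let $N=\{1,\dots,n\}$ with $n\ge 2$, and let $\mathbb{D}$ be a minimally rich domain of linear orders over $A$ that is connected with two distinct neighbours. If $f:\mathbb{D}^n\to A$ is unanimous and strategy-proof, then $f$ satisfies dictatorship.
   Context: A domain is a set $\mathbb{D}$ of linear orders (strict preferences) over $A$; a preference profile is $P=(P_1,\dots,P_n)\in\mathbb{D}^n$. For a linear order $P_i$, $r_k(P_i)$ is its $k$-th ranked alternative. $\mathbb{D}$ is minimally rich if every $a\in A$ is ranked first in some $P_i\in\mathbb{D}$. Two linear orders $P_i,P_i'$ are adjacent if $P_i'$ is obtained from $P_i$ by swapping two consecutively ranked alternatives and leaving all other ranks unchanged. A social choice function (scf) is a map $f:\mathbb{D}^n\to A$. It is unanimous if $f(P)=a$ whenever every voter ranks $a$ first. It is strategy-proof if there is no voter $i$, profile $P$, and $P_i'\in\mathbb{D}$ with $f(P_i',P_{-i})\,P_i\,f(P_i,P_{-i})$. It satisfies dictatorship if there is a voter $i$ with $f(P)=r_1(P_i)$ for all $P\in\mathbb{D}^n$. A path in $\mathbb{D}$ is a sequence of distinct preferences in $\mathbb{D}$ in which consecutive ones are adjacent; $\mathbb{D}$ is connected if any two of its preferences are joined by a path in $\mathbb{D}$. For $\bar{\mathbb{D}}\subseteq\mathbb{D}$, a neighbour of $\bar{\mathbb{D}}$ in $\mathbb{D}$ is a $P_i\in\mathbb{D}\setminus\bar{\mathbb{D}}$ adjacent to some element of $\bar{\mathbb{D}}$. Two preferences $P_i,P_i'\in\mathbb{D}$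 are top-connected in $\mathbb{D}$ if there is a path from $P_i$ to $P_i'$ in $\mathbb{D}$ all of whose members have the same top-ranked alternative. The top-connected closure $\mathbb{D}^{TCC}(P_i)$ is the set of preferences in $\mathbb{D}$ top-connected to $P_i$, together with $P_i$. $\mathbb{D}$ is connected with two distinct neighbours if (1) $\mathbb{D}$ is connected, and (2) for every $P_i\in\mathbb{D}$ there exist two neighbours $P_i',P_i''$ of $\mathbb{D}^{TCC}(P_i)$ in $\mathbb{D}$ with $r_1(P_i')\ne r_1(P_i'')$. *)

theory Defs
  imports Main
begin

text \<open>A linear order (strict preference) over a finite set A is represented by the list
  of all alternatives of A, from best to worst, without repetition.
  The k-th ranked alternative r_k(P) is P ! (k-1).
  A profile for n voters is a list of n preferences; voter i (1-based) is position i-1.\<close>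

definition linear_order_on :: "'a set \<Rightarrow> 'a list \<Rightarrow> bool" where
  "linear_order_on A P \<longleftrightarrow> distinct P \<and> set P = A"

definition is_domain :: "'a set \<Rightarrow> 'a list set \<Rightarrow> bool" where
  "is_domain A D \<longleftrightarrow> (\<forall>P\<in>D. linear_order_on A P)"

definition top_alt :: "'a list \<Rightarrow> 'a" where
  "top_alt P = P ! 0"

definition prefers :: "'a list \<Rightarrow> 'a \<Rightarrow> 'a \<Rightarrow> bool" where
  "prefers P a b \<longleftrightarrow> (\<exists>i j. i < j \<and> j < length P \<and> P ! i = a \<and> P ! j = b)"

definition minimally_rich :: "'a set \<Rightarrow> 'a list set \<Rightarrow> bool" where
  "minimally_rich A D \<longleftrightarrow> (\<forall>a\<in>A. \<exists>P\<in>D. top_alt P = a)"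

definition adjacent :: "'a list \<Rightarrow> 'a list \<Rightarrow> bool" where
  "adjacent P P' \<longleftrightarrow> (\<exists>k. Suc k < length P \<and> P' = P[k := P ! Suc k, Suc k := P ! k])"

definition is_path :: "'a list set \<Rightarrow> 'a list list \<Rightarrow> bool" where
  "is_path D ps \<longleftrightarrow> ps \<noteq> [] \<and> distinct ps \<and> set ps \<subseteq> D \<and>
     (\<forall>k. Suc k < length ps \<longrightarrow> adjacent (ps ! k) (ps ! Suc k))"

definition path_between :: "'a list set \<Rightarrow> 'a list \<Rightarrow> 'a list \<Rightarrow> 'a list list \<Rightarrow> bool" where
  "path_between D P P' ps \<longleftrightarrow> is_path D ps \<and> hd ps = P \<and> last ps = P'"

definition connected_domain :: "'a list set \<Rightarrow> bool" where
  "connected_domain D \<longleftrightarrow> (\<forall>P\<in>D. \<forall>P'\<in>D. \<exists>ps. path_between D P P' ps)"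

definition top_connected :: "'a list set \<Rightarrow> 'a list \<Rightarrow> 'a list \<Rightarrow> bool" where
  "top_connected D P P' \<longleftrightarrow> P \<in> D \<and> P' \<in> D \<and>
     (\<exists>ps. path_between D P P' ps \<and> (\<forall>Q\<in>set ps. top_alt Q = top_alt P))"

definition TCC :: "'a list set \<Rightarrow> 'a list \<Rightarrow> 'a list set" where
  "TCC D P = {P' \<in> D. top_connected D P P'} \<union> {P}"

definition neighbour :: "'a list set \<Rightarrow> 'a list set \<Rightarrow> 'a list \<Rightarrow> bool" where
  "neighbour D S P \<longleftrightarrow> P \<in> D - S \<and> (\<exists>Q\<in>S. adjacent Q P)"

definition connected_two_neighbours :: "'a list set \<Rightarrow> bool" where
  "connected_two_neighbours D \<longleftrightarrow> connected_domain D \<and>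
     (\<forall>P\<in>D. \<exists>P' P''. neighbour D (TCC D P) P' \<and> neighbour D (TCC D P) P'' \<and>
        top_alt P' \<noteq> top_alt P'')"

definition profiles :: "'a list set \<Rightarrow> nat \<Rightarrow> 'a list list set" where
  "profiles D n = {Ps. length Ps = n \<and> set Ps \<subseteq> D}"

definition unanimous :: "'a list set \<Rightarrow> nat \<Rightarrow> ('a list list \<Rightarrow> 'a) \<Rightarrow> bool" where
  "unanimous D n f \<longleftrightarrow> (\<forall>Ps\<in>profiles D n. \<forall>a.
      (\<forall>i<n. top_alt (Ps ! i) = a) \<longrightarrow> f Ps = a)"

definition strategy_proof :: "'a list set \<Rightarrow> nat \<Rightarrow> ('a list list \<Rightarrow> 'a) \<Rightarrow> bool" where
  "strategy_proof D n f \<longleftrightarrow> (\<forall>Ps\<in>profiles D n. \<forall>i<n. \<forall>P'\<in>D.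
      \<not> prefers (Ps ! i) (f (Ps[i := P'])) (f Ps))"

definition dictatorial :: "'a list set \<Rightarrow> nat \<Rightarrow> ('a list list \<Rightarrow> 'a) \<Rightarrow> bool" where
  "dictatorial D n f \<longleftrightarrow> (\<exists>i<n. \<forall>Ps\<in>profiles D n. f Ps = top_alt (Ps ! i))"

end

theory Submission
  imports Defs
begin

(* Two voters. Call X a swap pair if its top swap X' = swap_top X also lies in D. By
  strategy-proofness the outcomes at (X, X') and (X', X) lie among the top two alternatives of X,
  and they cannot coincide: a common value would make one top dominate the other, and such a
  dominance spreads, through the two neighbours of each top-connected closure, to ever more
  alternatives that the first voter can obtain, which is impossible in the finite set A. So on
  every swap pair one voter wins both times; by connectedness it is the same voter for all swap
  pairs, and walking along a path from the other voter's report to his own shows that he always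
  obtains his top.

  Many voters, by induction. Merging two voters p and q of an admissible rule gives an admissible
  rule with one voter less, hence a dictator: some voter j decides whenever p and q report alike.
  If j = p, fixing all other reports leaves a two-voter rule in p and q, and its dictator does not
  depend on the fixed reports. Otherwise merging p with j yields a second such voter, and the two
  contradict each other or strategy-proofness. *)

section \<open>Adjacent swaps and strict preferences\<close>

definition swap_at :: "nat \<Rightarrow> 'a list \<Rightarrow> 'a list" where
  "swap_at k P = P[k := P ! Suc k, Suc k := P ! k]"

abbreviation swap_top :: "'a list \<Rightarrow> 'a list" where
  "swap_top \<equiv> swap_at 0"

definition weakly_prefers :: "'a list \<Rightarrow> 'a \<Rightarrow> 'a \<Rightarrow> bool" where
  "weakly_prefers P x y \<longleftrightarrow> x = y \<or> prefers P x y"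

lemma adjacent_iff_swap_at: "adjacent P P' \<longleftrightarrow> (\<exists>k. Suc k < length P \<and> P' = swap_at k P)"
  unfolding adjacent_def swap_at_def by simp

lemma length_swap_at [simp]: "length (swap_at k P) = length P"
  unfolding swap_at_def by simp

lemma nth_swap_at:
  "Suc k < length P \<Longrightarrow> i < length P \<Longrightarrow>
    swap_at k P ! i = (if i = k then P ! Suc k else if i = Suc k then P ! k else P ! i)"
  unfolding swap_at_def by (auto simp: nth_list_update)

lemma swap_at_swap_at: "Suc k < length P \<Longrightarrow> swap_at k (swap_at k P) = P"
  by (rule nth_equalityI) (auto simp: nth_swap_at)

lemma swap_at_nth_0: "Suc k < length P \<Longrightarrow> k \<noteq> 0 \<Longrightarrow> swap_at k P ! 0 = P ! 0"
  by (subst nth_swap_at) auto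

lemma swap_top_nth:
  assumes "Suc 0 < length P"
  shows "swap_top P ! 0 = P ! 1" and "swap_top P ! 1 = P ! 0"
proof -
  show "swap_top P ! 0 = P ! 1"
    using assms by (subst nth_swap_at) auto
  show "swap_top P ! 1 = P ! 0"
    using assms by (subst nth_swap_at) auto
qed

lemma prefers_asym:
  assumes "distinct P" "prefers P x y"
  shows "\<not> prefers P y x"
proof
  assume "prefers P y x"
  then obtain i j i' j' where "i < j" "j < length P" "P ! i = x" "P ! j = y"
    and "i' < j'" "j' < length P" "P ! i' = y" "P ! j' = x"
    using assms(2) unfolding prefers_def by blast
  moreover from this have "i = j'" and "j = i'"
    using assms(1) nth_eq_iff_index_eq[of P] by auto
  ultimately show False
    by simp
qed

lemma prefers_trans:
  assumes "distinct P" "prefers P x y" "prefers P y z"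
  shows "prefers P x z"
proof -
  obtain i j i' j' where "i < j" "j < length P" "P ! i = x" "P ! j = y"
    and "i' < j'" "j' < length P" "P ! i' = y" "P ! j' = z"
    using assms(2,3) unfolding prefers_def by blast
  moreover from this have "j = i'"
    using assms(1) nth_eq_iff_index_eq[of P] by auto
  ultimately show ?thesis
    unfolding prefers_def by (intro exI[of _ i] exI[of _ j']) auto
qed

lemma prefers_total:
  assumes "x \<in> set P" "y \<in> set P" "x \<noteq> y"
  shows "prefers P x y \<or> prefers P y x"
proof -
  obtain i j where "i < length P" "P ! i = x" "j < length P" "P ! j = y"
    using assms(1,2) by (auto simp: in_set_conv_nth)
  moreover from this have "i < j \<or> j < i"
    using assms(3) by (metis linorder_neqE_nat)
  ultimately show ?thesis
    unfolding prefers_def by blast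
qed

lemma not_prefers_top:
  assumes "distinct P"
  shows "\<not> prefers P y (P ! 0)"
proof
  assume "prefers P y (P ! 0)"
  then obtain i j where "i < j" "j < length P" "P ! j = P ! 0"
    unfolding prefers_def by blast
  moreover from this have "0 < length P"
    by linarith
  ultimately show False
    using assms nth_eq_iff_index_eq[of P j 0] by simp
qed

lemma prefers_second_imp_top:
  assumes "distinct P" "prefers P x (P ! 1)"
  shows "x = P ! 0"
proof -
  obtain i j where "i < j" "j < length P" "P ! i = x" "P ! j = P ! 1"
    using assms(2) unfolding prefers_def by blast
  moreover from this have "j = 1"
    using assms(1) nth_eq_iff_index_eq[of P j 1] by simp
  ultimately show ?thesis
    by simp
qed

lemma weakly_prefers_trans:
  "distinct P \<Longrightarrow> weakly_prefers P x y \<Longrightarrow> weakly_prefers P y z \<Longrightarrow> weakly_prefers P x z"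
  unfolding weakly_prefers_def using prefers_trans by metis

lemma weakly_prefers_top: "distinct P \<Longrightarrow> weakly_prefers P x (P ! 0) \<Longrightarrow> x = P ! 0"
  unfolding weakly_prefers_def using not_prefers_top by metis

lemma weakly_prefers_second:
  "distinct P \<Longrightarrow> weakly_prefers P x (P ! 1) \<Longrightarrow> x = P ! 0 \<or> x = P ! 1"
  unfolding weakly_prefers_def using prefers_second_imp_top by metis

lemma weakly_prefers_imp_not_prefers:
  "distinct P \<Longrightarrow> weakly_prefers P x y \<Longrightarrow> \<not> prefers P y x"
  unfolding weakly_prefers_def using prefers_asym by metis

lemma not_prefers_imp_weakly_prefers:
  "x \<in> set P \<Longrightarrow> y \<in> set P \<Longrightarrow> \<not> prefers P y x \<Longrightarrow> weakly_prefers P x y"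
  unfolding weakly_prefers_def using prefers_total by metis

lemma prefers_reversed_by_swap_at:
  assumes "distinct P" and k: "Suc k < length P"
    and "prefers P u v" and "prefers (swap_at k P) v u"
  shows "u = P ! k \<and> v = P ! Suc k"
proof -
  define t where "t i = (if i = k then Suc k else if i = Suc k then k else i)" for i
  have t_less: "i < length P \<Longrightarrow> t i < length P" for i
    using k by (auto simp: t_def)
  have swap_t: "i < length P \<Longrightarrow> swap_at k P ! i = P ! t i" for i
    using k by (auto simp: t_def nth_swap_at)
  obtain i' j' where ij': "i' < j'" "j' < length P" "P ! i' = u" "P ! j' = v"
    using \<open>prefers P u v\<close> unfolding prefers_def by blast
  obtain i j where ij: "i < j" "j < length P" "P ! t i = v" "P ! t j = u"
    using \<open>prefers (swap_at k P) v u\<close> swap_t unfolding prefers_def by auto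
  have "t i = j'" and "t j = i'"
    using ij ij' t_less[of i] t_less[of j] \<open>distinct P\<close> nth_eq_iff_index_eq[of P] by auto
  then have "i = k \<and> j = Suc k"
    using ij ij' unfolding t_def by (auto split: if_splits)
  then show ?thesis
    using ij by (simp add: t_def)
qed

section \<open>Paths and top-connected closures\<close>

lemma path_last_induct:
  assumes path: "is_path D ps" and hd: "Q (hd ps)"
    and step: "\<And>R k. R \<in> set ps \<Longrightarrow> swap_at k R \<in> set ps \<Longrightarrow> Suc k < length R \<Longrightarrow>
      Q R \<Longrightarrow> Q (swap_at k R)"
  shows "Q (last ps)"
proof -
  have ne: "ps \<noteq> []"
    using path unfolding is_path_def by simp
  have "Q (ps ! i)" if "i < length ps" for i
    using that
  proof (induction i)
    case 0
    then show ?case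
      using hd ne by (simp add: hd_conv_nth)
  next
    case (Suc i)
    then obtain k where "Suc k < length (ps ! i)" "ps ! Suc i = swap_at k (ps ! i)"
      using path unfolding is_path_def adjacent_iff_swap_at by auto
    then show ?case
      using Suc step[of "ps ! i" k] by (metis Suc_lessD nth_mem)
  qed
  then show ?thesis
    using ne by (simp add: last_conv_nth)
qed

lemma is_path_take:
  assumes "is_path D ps" and "i < length ps"
  shows "is_path D (take (Suc i) ps)" and "hd (take (Suc i) ps) = hd ps"
    and "last (take (Suc i) ps) = ps ! i"
proof -
  show "is_path D (take (Suc i) ps)"
    using assms set_take_subset[of "Suc i" ps] unfolding is_path_def by force
  show "hd (take (Suc i) ps) = hd ps"
    using assms(2) by (cases ps) auto
  show "last (take (Suc i) ps) = ps ! i"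
    using assms(2) by (simp add: take_Suc_conv_app_nth)
qed

lemma is_path_snoc:
  assumes path: "is_path D ps" and "N \<in> D" "N \<notin> set ps" and adj: "adjacent (last ps) N"
  shows "is_path D (ps @ [N])"
proof -
  have "ps \<noteq> []"
    using path unfolding is_path_def by simp
  have "adjacent ((ps @ [N]) ! k) ((ps @ [N]) ! Suc k)" if "Suc k < length (ps @ [N])" for k
  proof (cases "Suc k < length ps")
    case True
    then show ?thesis
      using path unfolding is_path_def by (simp add: nth_append)
  next
    case False
    then have "k = length ps - 1" "Suc k = length ps"
      using that by simp_all
    then show ?thesis
      using adj \<open>ps \<noteq> []\<close> by (simp add: nth_append last_conv_nth)
  qed
  then show ?thesis
    using assms unfolding is_path_def by auto
qed

lemma TCC_path:
  assumes "W \<in> D" and "Q \<in> TCC D W"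
  obtains ps where "is_path D ps" "hd ps = W" "last ps = Q" "\<forall>R\<in>set ps. R ! 0 = W ! 0"
proof (cases "Q = W")
  case True
  then show ?thesis
    using that[of "[W]"] \<open>W \<in> D\<close> unfolding is_path_def by simp
next
  case False
  then show ?thesis
    using assms that unfolding TCC_def top_connected_def path_between_def top_alt_def by blast
qed

lemma TCC_subset: "W \<in> D \<Longrightarrow> TCC D W \<subseteq> D"
  unfolding TCC_def by auto

lemma TCC_top:
  assumes "W \<in> D" "Q \<in> TCC D W"
  shows "Q ! 0 = W ! 0"
proof -
  obtain ps where "is_path D ps" "last ps = Q" "\<forall>R\<in>set ps. R ! 0 = W ! 0"
    using TCC_path[OF assms] by blast
  then show ?thesis
    unfolding is_path_def using last_in_set by blast
qed

lemma TCC_adjacent_same_top: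
  assumes "W \<in> D" "Q \<in> TCC D W" "N \<in> D" "adjacent Q N" "N ! 0 = W ! 0"
  shows "N \<in> TCC D W"
proof -
  obtain ps where ps: "is_path D ps" "hd ps = W" "last ps = Q" "\<forall>R\<in>set ps. R ! 0 = W ! 0"
    using TCC_path assms(1,2) by blast
  have "\<exists>qs. is_path D qs \<and> hd qs = W \<and> last qs = N \<and> (\<forall>R\<in>set qs. R ! 0 = W ! 0)"
  proof (cases "N \<in> set ps")
    case True
    then obtain i where "i < length ps" "ps ! i = N"
      by (auto simp: in_set_conv_nth)
    then show ?thesis
      using ps is_path_take[OF ps(1)] set_take_subset[of "Suc i" ps]
      by (intro exI[of _ "take (Suc i) ps"]) auto
  next
    case False
    have "ps \<noteq> []"
      using ps(1) unfolding is_path_def by simp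
    then show ?thesis
      using False ps assms is_path_snoc[OF ps(1)] by (intro exI[of _ "ps @ [N]"]) auto
  qed
  then show ?thesis
    using assms unfolding TCC_def top_connected_def path_between_def top_alt_def by auto
qed

section \<open>Two voters\<close>

locale pref_domain =
  fixes A :: "'a set" and D :: "'a list set"
  assumes finite_A: "finite A" and card_A: "2 \<le> card A"
    and domain: "is_domain A D"
    and two_neighbours: "connected_two_neighbours D"
begin

lemma distinct_pref: "P \<in> D \<Longrightarrow> distinct P"
  using domain unfolding is_domain_def linear_order_on_def by auto

lemma set_pref: "P \<in> D \<Longrightarrow> set P = A"
  using domain unfolding is_domain_def linear_order_on_def by auto

lemma length_pref: "P \<in> D \<Longrightarrow> Suc 0 < length P"
  using card_A distinct_card[of P] distinct_pref[of P] set_pref[of P] by simp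

lemma top_neq_second:
  assumes "P \<in> D"
  shows "P ! 0 \<noteq> P ! 1"
proof -
  have "0 < length P" "1 < length P"
    using length_pref[OF assms] by linarith+
  then show ?thesis
    using distinct_pref[OF assms] nth_eq_iff_index_eq[of P 0 1] by simp
qed

lemma top_in_A:
  assumes "P \<in> D"
  shows "P ! 0 \<in> A"
proof -
  have "0 < length P"
    using length_pref[OF assms] by linarith
  then show ?thesis
    using set_pref[OF assms] nth_mem by blast
qed

lemma second_in_A: "P \<in> D \<Longrightarrow> P ! 1 \<in> A"
  using set_pref length_pref nth_mem by (metis One_nat_def)

lemma exists_path: "P \<in> D \<Longrightarrow> P' \<in> D \<Longrightarrow> \<exists>ps. is_path D ps \<and> hd ps = P \<and> last ps = P'"
  using two_neighbours
  unfolding connected_two_neighbours_def connected_domain_def path_between_def by blast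

lemma swap_top_pref:
  assumes "P \<in> D"
  shows "swap_top P ! 0 = P ! 1" "swap_top P ! 1 = P ! 0" "swap_top (swap_top P) = P"
  using swap_top_nth[of P] swap_at_swap_at[of 0 P] length_pref[OF assms] by simp_all

end

locale two_voter_scf = pref_domain A D for A :: "'a set" and D :: "'a list set" +
  fixes F :: "'a list \<Rightarrow> 'a list \<Rightarrow> 'a"
  assumes F_in_A: "\<And>P1 P2. P1 \<in> D \<Longrightarrow> P2 \<in> D \<Longrightarrow> F P1 P2 \<in> A"
    and F_unanimous: "\<And>P. P \<in> D \<Longrightarrow> F P P = P ! 0"
    and sp_first: "\<And>P1 P1' P2. P1 \<in> D \<Longrightarrow> P1' \<in> D \<Longrightarrow> P2 \<in> D \<Longrightarrow>
      \<not> prefers P1 (F P1' P2) (F P1 P2)"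
    and sp_second: "\<And>P1 P2 P2'. P1 \<in> D \<Longrightarrow> P2 \<in> D \<Longrightarrow> P2' \<in> D \<Longrightarrow>
      \<not> prefers P2 (F P1 P2') (F P1 P2)"
begin

lemma two_voter_scf_swap: "two_voter_scf A D (\<lambda>P1 P2. F P2 P1)"
  by unfold_locales
    (auto simp: finite_A card_A domain two_neighbours F_in_A F_unanimous sp_first sp_second)

lemma sp_weak_first:
  assumes "X \<in> D" "X' \<in> D" "Y \<in> D"
  shows "weakly_prefers X (F X Y) (F X' Y)"
proof (rule not_prefers_imp_weakly_prefers)
  show "F X Y \<in> set X" "F X' Y \<in> set X"
    using F_in_A set_pref assms by auto
  show "\<not> prefers X (F X' Y) (F X Y)"
    using sp_first assms by blast
qed

lemma sp_weak_second:
  "X \<in> D \<Longrightarrow> Y \<in> D \<Longrightarrow> Y' \<in> D \<Longrightarrow> weakly_prefers Y (F X Y) (F X Y')"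
  using two_voter_scf.sp_weak_first[OF two_voter_scf_swap, of Y Y' X] by simp

lemma first_gets_top:
  assumes "X0 \<in> D" "X \<in> D" "Y \<in> D" "F X0 Y = X ! 0"
  shows "F X Y = X ! 0"
proof -
  have "weakly_prefers X (F X Y) (X ! 0)"
    using sp_weak_first[of X X0 Y] assms by simp
  then show ?thesis
    by (rule weakly_prefers_top[OF distinct_pref[OF assms(2)]])
qed

lemma second_gets_top:
  "X \<in> D \<Longrightarrow> Y0 \<in> D \<Longrightarrow> Y \<in> D \<Longrightarrow> F X Y0 = Y ! 0 \<Longrightarrow> F X Y = Y ! 0"
  using two_voter_scf.first_gets_top[OF two_voter_scf_swap, of Y0 Y X] by simp

lemma first_gets_top_or_second:
  assumes "X \<in> D" "Y \<in> D" "Z \<in> D" "F Z Y = X ! 1"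
  shows "F X Y = X ! 0 \<or> F X Y = X ! 1"
proof -
  have "weakly_prefers X (F X Y) (X ! 1)"
    using sp_weak_first[of X Z Y] assms by simp
  then show ?thesis
    by (rule weakly_prefers_second[OF distinct_pref[OF assms(1)]])
qed

lemma second_gets_top_or_second:
  "X \<in> D \<Longrightarrow> Y \<in> D \<Longrightarrow> Z \<in> D \<Longrightarrow> F X Z = Y ! 1 \<Longrightarrow> F X Y = Y ! 0 \<or> F X Y = Y ! 1"
  using two_voter_scf.first_gets_top_or_second[OF two_voter_scf_swap, of Y X Z] by simp

lemma F_swap_at_second:
  assumes "X \<in> D" "P \<in> D" "Suc k < length P" "swap_at k P \<in> D"
  shows "F X (swap_at k P) = F X P \<or> (F X P = P ! k \<and> F X (swap_at k P) = P ! Suc k)"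
proof (cases "F X (swap_at k P) = F X P")
  case False
  then have "prefers P (F X P) (F X (swap_at k P))"
    and "prefers (swap_at k P) (F X (swap_at k P)) (F X P)"
    using sp_weak_second[of X P "swap_at k P"] sp_weak_second[of X "swap_at k P" P] assms
    unfolding weakly_prefers_def by auto
  then show ?thesis
    by (simp add: prefers_reversed_by_swap_at[OF distinct_pref[OF assms(2)] assms(3)])
qed simp

lemma F_tops_only_swapped:
  assumes D: "Q \<in> D" "N \<in> D" "X \<in> D" "Y \<in> D"
    and tops: "Q ! 1 = N ! 0" "N ! 1 = Q ! 0" "X ! 0 = Q ! 0" "Y ! 0 = N ! 0"
  shows "F X Y = F Q N"
proof -
  have distinct_tops: "Q ! 0 \<noteq> N ! 0"
    using top_neq_second[of Q] tops D by auto
  have XN: "F X N = N ! 0 \<or> F X N = N ! 1"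
    using second_gets_top_or_second[of X N X] F_unanimous[of X] D tops by auto
  have QY: "F Q Y = Q ! 0 \<or> F Q Y = Q ! 1"
    using first_gets_top_or_second[of Q Y Y] F_unanimous[of Y] D tops by auto
  have Q_wins: "F Q N = Q ! 0" if "F X Y \<noteq> N ! 0"
  proof -
    have "F X N = Q ! 0"
      using second_gets_top[of X N Y] D tops that XN by auto
    then show ?thesis
      using first_gets_top[of X Q N] D tops by simp
  qed
  have N_wins: "F Q N = N ! 0" if "F X Y \<noteq> Q ! 0"
  proof -
    have "F Q Y = N ! 0"
      using first_gets_top[of Q X Y] D tops that QY by auto
    then show ?thesis
      using second_gets_top[of Q Y N] D tops by simp
  qed
  show ?thesis
  proof (cases "F X Y = Q ! 0")
    case True
    then show ?thesis
      using Q_wins distinct_tops by simp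
  next
    case False
    then show ?thesis
      using Q_wins N_wins distinct_tops by metis
  qed
qed

lemma transfer_first:
  assumes D: "W \<in> D" "Q \<in> D" "swap_top W \<in> D" "swap_top Q \<in> D"
    and tops: "Q ! 0 = W ! 0" "W ! 1 \<noteq> Q ! 1"
    and F_swap_W: "F (swap_top W) Q = W ! 1"
  shows "F W (swap_top Q) = W ! 0"
proof (rule ccontr)
  assume F_W: "F W (swap_top Q) \<noteq> W ! 0"
  have "F W (swap_top Q) = Q ! 1"
    using second_gets_top_or_second[of W "swap_top Q" W] F_unanimous[of W] F_W D tops
      swap_top_pref[OF D(2)] by auto
  moreover have "F (swap_top W) (swap_top Q) = Q ! 1"
  proof (rule ccontr)
    assume "F (swap_top W) (swap_top Q) \<noteq> Q ! 1"
    with \<open>F W (swap_top Q) = Q ! 1\<close>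
    have "prefers W (Q ! 1) (F (swap_top W) (swap_top Q))"
      and "prefers (swap_top W) (F (swap_top W) (swap_top Q)) (Q ! 1)"
      using sp_weak_first[of W "swap_top W" "swap_top Q"] sp_weak_first[of "swap_top W" W "swap_top Q"] D
      unfolding weakly_prefers_def by auto
    then have "Q ! 1 = W ! 0"
      by (simp add: prefers_reversed_by_swap_at[OF distinct_pref[OF D(1)] length_pref[OF D(1)]])
    then show False
      using top_neq_second[of Q] D tops by simp
  qed
  ultimately have "weakly_prefers Q (W ! 1) (Q ! 1)"
    using sp_weak_second[of "swap_top W" Q "swap_top Q"] D F_swap_W by simp
  then have "W ! 1 = Q ! 0 \<or> W ! 1 = Q ! 1"
    by (rule weakly_prefers_second[OF distinct_pref[OF D(2)]])
  then show False
    using top_neq_second[OF D(1)] tops by auto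
qed

lemma transfer_second:
  assumes "W \<in> D" "Q \<in> D" "swap_top W \<in> D" "swap_top Q \<in> D"
    and "Q ! 0 = W ! 0" "W ! 1 \<noteq> Q ! 1" and "F Q (swap_top W) = W ! 1"
  shows "F (swap_top Q) W = W ! 0"
  using two_voter_scf.transfer_first[OF two_voter_scf_swap] assms by blast

definition dominates :: "'a \<Rightarrow> 'a \<Rightarrow> bool" where
  "dominates a b \<longleftrightarrow> (\<forall>X\<in>D. \<forall>Y\<in>D. X ! 0 = a \<longrightarrow> Y ! 0 = b \<longrightarrow> F X Y = a \<and> F Y X = a)"

lemma dominates_step:
  assumes D: "W \<in> D" "Q \<in> D" "swap_top W \<in> D" "swap_top Q \<in> D"
    and tops: "Q ! 0 = W ! 0" "W ! 1 \<noteq> Q ! 1" and dom: "dominates (W ! 1) (W ! 0)"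
  shows "dominates (W ! 0) (Q ! 1)"
  unfolding dominates_def
proof (intro ballI impI conjI)
  have "F (swap_top W) Q = W ! 1" "F Q (swap_top W) = W ! 1"
    using dom D tops swap_top_pref[OF D(1)] unfolding dominates_def by simp_all
  then have W_wins: "F W (swap_top Q) = W ! 0" "F (swap_top Q) W = W ! 0"
    using transfer_first[OF D tops] transfer_second[OF D tops] by simp_all
  fix X Y
  assume XY: "X \<in> D" "Y \<in> D" "X ! 0 = W ! 0" "Y ! 0 = Q ! 1"
  have "F X Y = F Q (swap_top Q)" "F W (swap_top Q) = F Q (swap_top Q)"
    "F Y X = F (swap_top Q) Q" "F (swap_top Q) W = F (swap_top Q) Q"
    by (rule F_tops_only_swapped; use D XY tops swap_top_pref[OF D(2)] in simp)+
  then show "F X Y = W ! 0" "F Y X = W ! 0"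
    using W_wins by simp_all
qed

definition option_set :: "'a list \<Rightarrow> 'a set" where
  "option_set Y = {F X Y | X. X \<in> D}"

lemma option_setI: "X \<in> D \<Longrightarrow> F X Y \<in> option_set Y"
  unfolding option_set_def by blast

lemma option_setE:
  assumes "z \<in> option_set Y"
  obtains X where "X \<in> D" "F X Y = z"
  using assms unfolding option_set_def by blast

lemma top_mem_option_set: "Y \<in> D \<Longrightarrow> Y ! 0 \<in> option_set Y"
  using option_setI[of Y Y] F_unanimous by simp

lemma first_gets_top_option:
  assumes "X \<in> D" "Y \<in> D" "X ! 0 \<in> option_set Y"
  shows "F X Y = X ! 0"
  using assms(3) by (rule option_setE) (rule first_gets_top[OF _ assms(1,2)])

lemma first_gets_top_or_second_option:
  assumes "X \<in> D" "Y \<in> D" "X ! 1 \<in> option_set Y"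
  shows "F X Y = X ! 0 \<or> F X Y = X ! 1"
  using assms(3) by (rule option_setE) (rule first_gets_top_or_second[OF assms(1,2)])

definition witnessed :: "'a set \<Rightarrow> 'a \<Rightarrow> bool" where
  "witnessed U b \<longleftrightarrow>
    (\<forall>u\<in>U. \<exists>V\<in>D. V ! 0 = u \<and> V ! 1 \<in> insert b U \<and> (\<forall>Y\<in>D. F V Y \<noteq> V ! 1))"

lemma witnessed_insert:
  assumes wit: "witnessed U b" and Q: "Q \<in> D" "Q ! 0 = b" "\<forall>Y\<in>D. F Q Y \<noteq> Q ! 1"
  shows "witnessed (insert b U) (Q ! 1)"
  unfolding witnessed_def
proof
  fix u
  assume "u \<in> insert b U"
  then show "\<exists>V\<in>D. V ! 0 = u \<and> V ! 1 \<in> insert (Q ! 1) (insert b U) \<and> (\<forall>Y\<in>D. F V Y \<noteq> V ! 1)"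
  proof
    assume "u = b"
    then show ?thesis
      using Q by blast
  next
    assume "u \<in> U"
    then show ?thesis
      using wit unfolding witnessed_def by blast
  qed
qed

lemma option_set_swap_at:
  assumes R: "R \<in> D" "Suc k < length R" "swap_at k R \<in> D"
    and U: "U \<subseteq> option_set R" and wit: "witnessed U b" and b: "b \<in> option_set (swap_at k R)"
  shows "U \<subseteq> option_set (swap_at k R)"
proof
  fix u
  assume "u \<in> U"
  then obtain V where V: "V \<in> D" "V ! 0 = u" "V ! 1 \<in> insert b U"
    and never_second: "\<forall>Y\<in>D. F V Y \<noteq> V ! 1"
    using wit unfolding witnessed_def by blast
  show "u \<in> option_set (swap_at k R)"
  proof (rule ccontr)
    assume lost: "u \<notin> option_set (swap_at k R)"
    have "F V R = u"
      using first_gets_top_option[OF V(1) R(1)] U \<open>u \<in> U\<close> V(2) by auto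
    moreover have "F V (swap_at k R) \<noteq> u"
      using lost option_setI[OF V(1)] by metis
    ultimately have u_k: "u = R ! k"
      using F_swap_at_second[OF V(1) R] by auto
    have "V ! 1 \<in> option_set (swap_at k R)"
    proof (cases "V ! 1 = b")
      case False
      then obtain X where X: "X \<in> D" "F X R = V ! 1"
        using V(3) U option_setE by blast
      have "V ! 1 \<noteq> u"
        using top_neq_second[OF V(1)] V(2) by simp
      then have "F X (swap_at k R) = V ! 1"
        using F_swap_at_second[OF X(1) R] X(2) u_k by auto
      then show ?thesis
        using option_setI[OF X(1)] by metis
    qed (use b in simp)
    then have "F V (swap_at k R) = V ! 0 \<or> F V (swap_at k R) = V ! 1"
      by (rule first_gets_top_or_second_option[OF V(1) R(3)])
    then show False
      using lost never_second option_setI[OF V(1)] V(2) R(3) by metis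
  qed
qed

lemma option_set_TCC:
  assumes W: "W \<in> D" and Q: "Q \<in> TCC D W"
    and U: "U \<subseteq> option_set W" and wit: "witnessed U (W ! 0)"
  shows "U \<subseteq> option_set Q"
proof -
  obtain ps where ps: "is_path D ps" "hd ps = W" "last ps = Q" "\<forall>R\<in>set ps. R ! 0 = W ! 0"
    using TCC_path[OF W Q] by blast
  have "U \<subseteq> option_set (last ps)"
  proof (rule path_last_induct[OF ps(1)])
    show "U \<subseteq> option_set (hd ps)"
      using U ps(2) by simp
    fix R k
    assume R: "R \<in> set ps" "swap_at k R \<in> set ps" "Suc k < length R" "U \<subseteq> option_set R"
    then have "R \<in> D" "swap_at k R \<in> D"
      using ps(1) unfolding is_path_def by auto
    moreover have "W ! 0 \<in> option_set (swap_at k R)"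
      using top_mem_option_set[OF \<open>swap_at k R \<in> D\<close>] ps(4) R(2) by simp
    ultimately show "U \<subseteq> option_set (swap_at k R)"
      using option_set_swap_at R(3,4) wit by blast
  qed
  then show ?thesis
    using ps(3) by simp
qed

lemma TCC_swap_top_neighbour:
  assumes W: "W \<in> D"
  obtains Q where "Q \<in> TCC D W" "Q \<in> D" "swap_top Q \<in> D" "Q ! 0 = W ! 0" "Q ! 1 \<noteq> a"
proof -
  obtain N1 N2 where "neighbour D (TCC D W) N1" "neighbour D (TCC D W) N2" "N1 ! 0 \<noteq> N2 ! 0"
    using two_neighbours W unfolding connected_two_neighbours_def top_alt_def by blast
  then obtain N where N: "neighbour D (TCC D W) N" "N ! 0 \<noteq> a"
    by metis
  then obtain Q k where Q: "Q \<in> TCC D W" "N \<in> D" "N \<notin> TCC D W"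
    and k: "Suc k < length Q" "N = swap_at k Q"
    unfolding neighbour_def adjacent_iff_swap_at by blast
  have Q_top: "Q ! 0 = W ! 0"
    using TCC_top[OF W Q(1)] .
  have "k = 0"
  proof (rule ccontr)
    assume "k \<noteq> 0"
    then have "N ! 0 = W ! 0"
      using swap_at_nth_0[OF k(1)] k(2) Q_top by simp
    then have "N \<in> TCC D W"
      using TCC_adjacent_same_top[OF W Q(1) Q(2)] k unfolding adjacent_iff_swap_at by blast
    then show False
      using Q(3) by contradiction
  qed
  moreover have "Q \<in> D"
    using TCC_subset[OF W] Q(1) by blast
  ultimately show ?thesis
    using that[of Q] Q k Q_top N(2) swap_top_pref(1) by auto
qed

lemma second_unattainable_if_dominates:
  assumes Q: "Q \<in> D" "swap_top Q \<in> D" and dom: "dominates (Q ! 0) (Q ! 1)"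
  shows "\<forall>Y\<in>D. F Q Y \<noteq> Q ! 1"
proof (intro ballI notI)
  fix Y
  assume "Y \<in> D" "F Q Y = Q ! 1"
  then have "F Q (swap_top Q) = Q ! 1"
    using second_gets_top[OF Q(1) _ Q(2)] swap_top_pref[OF Q(1)] by simp
  moreover have "F Q (swap_top Q) = Q ! 0"
    using dom Q swap_top_pref[OF Q(1)] unfolding dominates_def by simp
  ultimately show False
    using top_neq_second[OF Q(1)] by simp
qed

definition dominance_chain :: "'a list \<Rightarrow> 'a set \<Rightarrow> bool" where
  "dominance_chain W U \<longleftrightarrow> W \<in> D \<and> swap_top W \<in> D \<and> dominates (W ! 1) (W ! 0) \<and>
     U \<subseteq> A \<and> W ! 0 \<notin> U \<and> U \<subseteq> option_set W \<and> witnessed U (W ! 0)"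

lemma dominance_chain_step:
  assumes "dominance_chain W U"
  shows "\<exists>N. dominance_chain N (insert (W ! 0) U)"
proof -
  have W: "W \<in> D" "swap_top W \<in> D" and dom: "dominates (W ! 1) (W ! 0)"
    and U: "U \<subseteq> A" "W ! 0 \<notin> U" "U \<subseteq> option_set W" and wit: "witnessed U (W ! 0)"
    using assms unfolding dominance_chain_def by auto
  obtain Q where Q: "Q \<in> TCC D W" "Q \<in> D" "swap_top Q \<in> D" "Q ! 0 = W ! 0" "Q ! 1 \<noteq> W ! 1"
    using TCC_swap_top_neighbour[OF W(1)] by blast
  define b c N where "b = W ! 0" and "c = Q ! 1" and "N = swap_top Q"
  have N: "N \<in> D" "N ! 0 = c" "N ! 1 = b" "swap_top N = Q"
    using Q swap_top_pref[OF Q(2)] by (simp_all add: N_def b_def c_def)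
  have "c \<noteq> b"
    using top_neq_second[OF Q(2)] Q(4) by (simp add: b_def c_def)
  have "dominates b c"
    using dominates_step[OF W(1) Q(2) W(2) Q(3) Q(4)] Q(5) dom by (simp add: b_def c_def)
  then have F_QN: "F Q N = b" "F N Q = b"
    using Q(2,4) N(1,2) unfolding dominates_def b_def by simp_all
  have UQ: "U \<subseteq> option_set Q"
    using option_set_TCC[OF W(1) Q(1) U(3) wit] .
  have "c \<notin> U"
  proof
    assume "c \<in> U"
    then have "F N Q = c"
      using first_gets_top_option[OF N(1) Q(2)] UQ N(2) by auto
    then show False
      using F_QN \<open>c \<noteq> b\<close> by simp
  qed
  have UN: "U \<subseteq> option_set N"
    using option_set_swap_at[OF Q(2) length_pref[OF Q(2)] Q(3) UQ wit] option_setI[OF Q(2), of N] F_QN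
    by (simp add: N_def b_def)
  have "witnessed (insert b U) (N ! 0)"
    using witnessed_insert[OF wit Q(2) Q(4) second_unattainable_if_dominates[OF Q(2,3)]]
      \<open>dominates b c\<close> Q(4) N(2) by (simp add: b_def c_def)
  moreover have "insert b U \<subseteq> option_set N"
    using UN option_setI[OF Q(2), of N] F_QN by simp
  moreover have "insert b U \<subseteq> A"
    using U(1) top_in_A[OF W(1)] by (simp add: b_def)
  ultimately have "dominance_chain N (insert b U)"
    unfolding dominance_chain_def using N Q(2,3) \<open>dominates b c\<close> \<open>c \<noteq> b\<close> \<open>c \<notin> U\<close> by simp
  then show ?thesis
    by (auto simp: b_def)
qed

lemma no_dominance_chain: "\<not> dominance_chain W U"
proof (induction "card (A - U)" arbitrary: W U rule: less_induct)
  case less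
  show ?case
  proof
    assume chain: "dominance_chain W U"
    then obtain N where N: "dominance_chain N (insert (W ! 0) U)"
      using dominance_chain_step by blast
    have "W ! 0 \<in> A - U"
      using chain top_in_A unfolding dominance_chain_def by auto
    then have "card (A - insert (W ! 0) U) < card (A - U)"
      using finite_A by (metis Diff_insert card_Diff1_less finite_Diff)
    then show False
      using less N by blast
  qed
qed

lemma not_dominates_swapped:
  assumes X: "X \<in> D" "swap_top X \<in> D"
  shows "\<not> dominates (X ! 1) (X ! 0)"
proof
  assume dom: "dominates (X ! 1) (X ! 0)"
  have F_swap: "F (swap_top X) X = X ! 1"
    using dom X swap_top_pref[OF X(1)] unfolding dominates_def by simp
  have "\<forall>Y\<in>D. F (swap_top X) Y \<noteq> swap_top X ! 1"
    using second_unattainable_if_dominates[OF X(2)] dom X(1) swap_top_pref[OF X(1)] by simp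
  then have "witnessed {X ! 1} (X ! 0)"
    using witnessed_insert[of "{}" "X ! 1" "swap_top X"] X(2) swap_top_pref[OF X(1)]
    unfolding witnessed_def by simp
  then have "dominance_chain X {X ! 1}"
    unfolding dominance_chain_def
    using X dom second_in_A[OF X(1)] top_neq_second[OF X(1)] option_setI[OF X(2), of X] F_swap
    by auto
  then show False
    using no_dominance_chain by blast
qed

end

definition first_decisive :: "('a list \<Rightarrow> 'a list \<Rightarrow> 'a) \<Rightarrow> 'a list \<Rightarrow> bool" where
  "first_decisive F X \<longleftrightarrow> F X (swap_top X) = X ! 0 \<and> F (swap_top X) X = X ! 1"

context two_voter_scf
begin

lemma dominates_if_first_wins_both:
  assumes X: "X \<in> D" "swap_top X \<in> D"
    and wins: "F X (swap_top X) = X ! 0" "F (swap_top X) X = X ! 0"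
  shows "dominates (X ! 0) (X ! 1)"
  unfolding dominates_def
proof (intro ballI impI conjI)
  fix X1 Y1
  assume XY: "X1 \<in> D" "Y1 \<in> D" "X1 ! 0 = X ! 0" "Y1 ! 0 = X ! 1"
  have "F X1 Y1 = F X (swap_top X)" "F Y1 X1 = F (swap_top X) X"
    by (rule F_tops_only_swapped; use X XY swap_top_pref[OF X(1)] in simp)+
  then show "F X1 Y1 = X ! 0" "F Y1 X1 = X ! 0"
    using wins by simp_all
qed

lemma first_or_second_decisive:
  assumes X: "X \<in> D" "swap_top X \<in> D"
  shows "first_decisive F X \<or> first_decisive (\<lambda>P1 P2. F P2 P1) X"
proof -
  note swap = swap_top_pref[OF X(1)]
  have "F X (swap_top X) = X ! 0 \<or> F X (swap_top X) = X ! 1"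
    using first_gets_top_or_second[OF X(1) X(2) X(2)] F_unanimous[OF X(2)] swap by simp
  moreover have "F (swap_top X) X = X ! 1 \<or> F (swap_top X) X = X ! 0"
    using first_gets_top_or_second[OF X(2) X(1) X(1)] F_unanimous[OF X(1)] swap by simp
  moreover have "\<not> (F X (swap_top X) = X ! 0 \<and> F (swap_top X) X = X ! 0)"
    using dominates_if_first_wins_both[OF X] not_dominates_swapped[OF X(2)] swap X(1) by auto
  moreover have "\<not> (F X (swap_top X) = X ! 1 \<and> F (swap_top X) X = X ! 1)"
    using dominates_if_first_wins_both[OF X(2)] not_dominates_swapped[OF X] swap X(1) by auto
  ultimately show ?thesis
    unfolding first_decisive_def by auto
qed

lemma first_decisive_same_top:
  assumes X: "X \<in> D" "swap_top X \<in> D" and Z: "Z \<in> D" "swap_top Z \<in> D"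
    and same_top: "X ! 0 = Z ! 0" and decisive: "first_decisive F X"
  shows "first_decisive F Z"
proof -
  note swap = swap_top_pref[OF X(1)] swap_top_pref[OF Z(1)]
  have F_X: "F X (swap_top X) = X ! 0" "F (swap_top X) X = X ! 1"
    using decisive unfolding first_decisive_def by simp_all
  show ?thesis
  proof (cases "X ! 1 = Z ! 1")
    case True
    have "F Z (swap_top Z) = F X (swap_top X)" "F (swap_top Z) Z = F (swap_top X) X"
      by (rule F_tops_only_swapped; use X Z swap same_top True in simp)+
    then show ?thesis
      using F_X same_top True unfolding first_decisive_def by simp
  next
    case False
    have "F (swap_top X) Z = F (swap_top X) X"
      by (rule F_tops_only_swapped) (use X Z swap same_top in simp_all)
    then have "F X (swap_top Z) = X ! 0"
      using transfer_first[OF X(1) Z(1) X(2) Z(2) same_top[symmetric] False] F_X by simp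
    moreover have "F X (swap_top Z) = F Z (swap_top Z)"
      by (rule F_tops_only_swapped) (use X Z swap same_top in simp_all)
    ultimately have "F Z (swap_top Z) = Z ! 0"
      using same_top by simp
    then show ?thesis
      using first_or_second_decisive[OF Z] top_neq_second[OF Z(1)]
      unfolding first_decisive_def by auto
  qed
qed

lemma first_decisive_swap_top:
  "X \<in> D \<Longrightarrow> first_decisive F X \<Longrightarrow> first_decisive F (swap_top X)"
  using swap_top_pref unfolding first_decisive_def by auto

lemma first_decisive_connected:
  assumes X: "X \<in> D" "swap_top X \<in> D" "first_decisive F X" and Z: "Z \<in> D" "swap_top Z \<in> D"
  shows "first_decisive F Z"
proof -
  obtain ps where ps: "is_path D ps" "hd ps = X" "last ps = Z"
    using exists_path X(1) Z(1) by blast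
  have "\<exists>E\<in>D. swap_top E \<in> D \<and> E ! 0 = last ps ! 0 \<and> first_decisive F E"
  proof (rule path_last_induct[OF ps(1)])
    show "\<exists>E\<in>D. swap_top E \<in> D \<and> E ! 0 = hd ps ! 0 \<and> first_decisive F E"
      using X ps(2) by blast
    fix R k
    assume R: "R \<in> set ps" "swap_at k R \<in> set ps" "Suc k < length R"
      and "\<exists>E\<in>D. swap_top E \<in> D \<and> E ! 0 = R ! 0 \<and> first_decisive F E"
    then obtain E where E: "E \<in> D" "swap_top E \<in> D" "E ! 0 = R ! 0" "first_decisive F E"
      by blast
    have RD: "R \<in> D" "swap_at k R \<in> D"
      using R(1,2) ps(1) unfolding is_path_def by auto
    show "\<exists>E\<in>D. swap_top E \<in> D \<and> E ! 0 = swap_at k R ! 0 \<and> first_decisive F E"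
    proof (cases "k = 0")
      case False
      then show ?thesis
        using E swap_at_nth_0[OF R(3)] by auto
    next
      case True
      then have R_swap: "swap_top R \<in> D"
        using RD(2) by simp
      then have "first_decisive F (swap_top R)"
        using first_decisive_swap_top[OF RD(1) first_decisive_same_top[OF E(1,2) RD(1) _ E(3,4)]]
        by simp
      then show ?thesis
        using RD(1) R_swap True swap_top_pref(3)[OF RD(1)] by (intro bexI[of _ "swap_top R"]) auto
    qed
  qed
  then show ?thesis
    using first_decisive_same_top Z ps(3) by metis
qed

lemma first_dictator_if_decisive:
  assumes decisive: "\<forall>X\<in>D. swap_top X \<in> D \<longrightarrow> first_decisive F X"
    and X: "X \<in> D" and Y: "Y \<in> D"
  shows "F X Y = X ! 0"
proof -
  obtain ps where ps: "is_path D ps" "hd ps = Y" "last ps = X"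
    using exists_path X Y by blast
  have "last ps ! 0 \<in> option_set Y"
  proof (rule path_last_induct[OF ps(1)])
    show "hd ps ! 0 \<in> option_set Y"
      using top_mem_option_set[OF Y] ps(2) by simp
    fix R k
    assume R: "R \<in> set ps" "swap_at k R \<in> set ps" "Suc k < length R" "R ! 0 \<in> option_set Y"
    have RD: "R \<in> D" "swap_at k R \<in> D"
      using R(1,2) ps(1) unfolding is_path_def by auto
    show "swap_at k R ! 0 \<in> option_set Y"
    proof (cases "k = 0")
      case False
      then show ?thesis
        using R(4) swap_at_nth_0[OF R(3)] by simp
    next
      case True
      note swap = swap_top_pref[OF RD(1)]
      have R_wins: "F (swap_top R) R = R ! 1"
        using decisive RD True swap unfolding first_decisive_def by auto
      have "F (swap_top R) Y \<noteq> R ! 0"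
      proof
        assume "F (swap_top R) Y = R ! 0"
        then have "F (swap_top R) R = R ! 0"
          using second_gets_top[OF _ Y RD(1)] RD(2) True by simp
        then show False
          using R_wins top_neq_second[OF RD(1)] by simp
      qed
      then have "F (swap_top R) Y = swap_top R ! 0"
        using first_gets_top_or_second_option[of "swap_top R" Y] RD(2) True Y R(4) swap by auto
      then show ?thesis
        using option_setI[of "swap_top R" Y] RD(2) True by simp
    qed
  qed
  then show ?thesis
    using first_gets_top_option[OF X Y] ps(3) by simp
qed

theorem two_voter_dictator:
  "(\<forall>X\<in>D. \<forall>Y\<in>D. F X Y = X ! 0) \<or> (\<forall>X\<in>D. \<forall>Y\<in>D. F X Y = Y ! 0)"
proof -
  interpret swapped: two_voter_scf A D "\<lambda>P1 P2. F P2 P1"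
    by (rule two_voter_scf_swap)
  show ?thesis
  proof (cases "\<exists>X\<in>D. swap_top X \<in> D \<and> first_decisive F X")
    case True
    then have "\<forall>Z\<in>D. swap_top Z \<in> D \<longrightarrow> first_decisive F Z"
      using first_decisive_connected by blast
    then show ?thesis
      using first_dictator_if_decisive by blast
  next
    case False
    then have "\<forall>Z\<in>D. swap_top Z \<in> D \<longrightarrow> first_decisive (\<lambda>P1 P2. F P2 P1) Z"
      using first_or_second_decisive by blast
    then show ?thesis
      using swapped.first_dictator_if_decisive by blast
  qed
qed

end

section \<open>Many voters\<close>

definition admissible_scf :: "'a set \<Rightarrow> 'a list set \<Rightarrow> nat \<Rightarrow> ('a list list \<Rightarrow> 'a) \<Rightarrow> bool" where
  "admissible_scf A D n f \<longleftrightarrow>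
    (\<forall>Ps\<in>profiles D n. f Ps \<in> A) \<and> unanimous D n f \<and> strategy_proof D n f"

lemma length_profiles: "Ps \<in> profiles D n \<Longrightarrow> length Ps = n"
  unfolding profiles_def by simp

lemma profiles_nth: "Ps \<in> profiles D n \<Longrightarrow> i < n \<Longrightarrow> Ps ! i \<in> D"
  unfolding profiles_def by auto

lemma profiles_update: "Ps \<in> profiles D n \<Longrightarrow> P \<in> D \<Longrightarrow> Ps[i := P] \<in> profiles D n"
  unfolding profiles_def by (auto dest: set_update_subset_insert[THEN subsetD])

lemma replicate_profiles: "P \<in> D \<Longrightarrow> replicate m P \<in> profiles D m"
  unfolding profiles_def by (auto simp: subset_iff)

lemma profiles_update_induct:
  assumes Bs: "Bs \<in> profiles D m" and Bs': "Bs' \<in> profiles D m" and "V Bs"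
    and step: "\<And>Cs i Q. Cs \<in> profiles D m \<Longrightarrow> i < m \<Longrightarrow> Q \<in> D \<Longrightarrow> V Cs \<Longrightarrow> V (Cs[i := Q])"
  shows "V Bs'"
proof -
  define mix where "mix k = map (\<lambda>i. if i < k then Bs' ! i else Bs ! i) [0..<m]" for k
  have mix_profiles: "mix k \<in> profiles D m" for k
    using profiles_nth[OF Bs] profiles_nth[OF Bs'] unfolding mix_def profiles_def by auto
  have "V (mix k)" for k
  proof (induction k)
    case 0
    have "mix 0 = Bs"
      using length_profiles[OF Bs] map_nth[of Bs] by (simp add: mix_def)
    then show ?case
      using \<open>V Bs\<close> by simp
  next
    case (Suc k)
    show ?case
    proof (cases "k < m")
      case True
      have "mix (Suc k) = (mix k)[k := Bs' ! k]"
        by (rule nth_equalityI) (use True in \<open>auto simp: mix_def nth_list_update less_Suc_eq\<close>)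
      then show ?thesis
        using step[OF mix_profiles True profiles_nth[OF Bs' True] Suc.IH] by simp
    next
      case False
      then have "mix (Suc k) = mix k"
        by (simp add: mix_def)
      then show ?thesis
        using Suc.IH by simp
    qed
  qed
  moreover have "mix m = Bs'"
    by (rule nth_equalityI) (use length_profiles[OF Bs'] in \<open>auto simp: mix_def\<close>)
  ultimately show ?thesis
    by metis
qed

lemma admissible_sp_weak:
  assumes "is_domain A D" "admissible_scf A D n f" "Ps \<in> profiles D n" "i < n" "P' \<in> D"
  shows "weakly_prefers (Ps ! i) (f Ps) (f (Ps[i := P']))"
proof (rule not_prefers_imp_weakly_prefers)
  have "set (Ps ! i) = A"
    using assms(1) profiles_nth[OF assms(3,4)] unfolding is_domain_def linear_order_on_def by blast
  then show "f Ps \<in> set (Ps ! i)" "f (Ps[i := P']) \<in> set (Ps ! i)"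
    using assms(2,3) profiles_update[OF assms(3,5)] unfolding admissible_scf_def by auto
  show "\<not> prefers (Ps ! i) (f (Ps[i := P'])) (f Ps)"
    using assms(2-5) unfolding admissible_scf_def strategy_proof_def by blast
qed

definition update_voters :: "nat set \<Rightarrow> 'a \<Rightarrow> 'a list \<Rightarrow> 'a list" where
  "update_voters J P' Ps = map (\<lambda>i. if i \<in> J then P' else Ps ! i) [0..<length Ps]"

lemma update_voters_profiles:
  assumes "Ps \<in> profiles D m" "P' \<in> D"
  shows "update_voters J P' Ps \<in> profiles D m"
  using assms profiles_nth[OF assms(1)] unfolding update_voters_def profiles_def by auto

lemma coalition_sp_weak:
  assumes dom: "is_domain A D" and f: "admissible_scf A D m f" and Ps: "Ps \<in> profiles D m"
    and P: "P \<in> D" and P': "P' \<in> D" and J: "J \<subseteq> {..<m}" "\<forall>i\<in>J. Ps ! i = P"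
  shows "weakly_prefers P (f Ps) (f (update_voters J P' Ps))"
proof -
  have "finite J"
    using J(1) finite_subset by blast
  then show ?thesis
    using J
  proof (induction J rule: finite_induct)
    case empty
    have "update_voters {} P' Ps = Ps"
      unfolding update_voters_def by (simp add: map_nth)
    then show ?case
      unfolding weakly_prefers_def by simp
  next
    case (insert j J)
    let ?Qs = "update_voters J P' Ps"
    have j: "j < m" "j \<notin> J"
      using insert by auto
    have "?Qs ! j = P" "update_voters (insert j J) P' Ps = ?Qs[j := P']"
      using insert.prems j length_profiles[OF Ps]
      by (auto simp: update_voters_def nth_list_update intro!: nth_equalityI)
    then have "weakly_prefers P (f ?Qs) (f (update_voters (insert j J) P' Ps))"
      using admissible_sp_weak[OF dom f update_voters_profiles[OF Ps P', of J] j(1) P'] by simp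
    moreover have "weakly_prefers P (f Ps) (f ?Qs)"
      using insert by auto
    moreover have "distinct P"
      using dom P unfolding is_domain_def linear_order_on_def by blast
    ultimately show ?case
      using weakly_prefers_trans by metis
  qed
qed

lemma admissible_scf_reindex:
  assumes dom: "is_domain A D" and f: "admissible_scf A D m f" and \<pi>: "\<forall>i<m. \<pi> i < k"
  shows "admissible_scf A D k (\<lambda>Qs. f (map (\<lambda>i. Qs ! \<pi> i) [0..<m]))"
proof -
  have reindex: "map (\<lambda>i. Qs ! \<pi> i) [0..<m] \<in> profiles D m" if "Qs \<in> profiles D k" for Qs
    using profiles_nth[OF that] \<pi> unfolding profiles_def by auto
  have "unanimous D k (\<lambda>Qs. f (map (\<lambda>i. Qs ! \<pi> i) [0..<m]))"
    unfolding unanimous_def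
  proof (intro ballI allI impI)
    fix Qs a
    assume Qs: "Qs \<in> profiles D k" and "\<forall>i<k. top_alt (Qs ! i) = a"
    then have "\<forall>i<m. top_alt (map (\<lambda>i. Qs ! \<pi> i) [0..<m] ! i) = a"
      using \<pi> by auto
    then show "f (map (\<lambda>i. Qs ! \<pi> i) [0..<m]) = a"
      using f reindex[OF Qs] unfolding admissible_scf_def unanimous_def by blast
  qed
  moreover have "strategy_proof D k (\<lambda>Qs. f (map (\<lambda>i. Qs ! \<pi> i) [0..<m]))"
    unfolding strategy_proof_def
  proof (intro ballI allI impI)
    fix Qs l P'
    assume Qs: "Qs \<in> profiles D k" and l: "l < k" and P': "P' \<in> D"
    define Ps where "Ps = map (\<lambda>i. Qs ! \<pi> i) [0..<m]"
    define J where "J = {i. i < m \<and> \<pi> i = l}"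
    have "map (\<lambda>i. Qs[l := P'] ! \<pi> i) [0..<m] = update_voters J P' Ps"
      using \<pi> length_profiles[OF Qs]
      by (auto simp: update_voters_def Ps_def J_def nth_list_update intro!: nth_equalityI)
    moreover have "weakly_prefers (Qs ! l) (f Ps) (f (update_voters J P' Ps))"
      by (rule coalition_sp_weak[OF dom f _ profiles_nth[OF Qs l] P'])
        (use reindex[OF Qs] in \<open>auto simp: Ps_def J_def\<close>)
    moreover have "distinct (Qs ! l)"
      using dom profiles_nth[OF Qs l] unfolding is_domain_def linear_order_on_def by blast
    ultimately show "\<not> prefers (Qs ! l) (f (map (\<lambda>i. Qs[l := P'] ! \<pi> i) [0..<m]))
        (f (map (\<lambda>i. Qs ! \<pi> i) [0..<m]))"
      using weakly_prefers_imp_not_prefers by (metis Ps_def)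
  qed
  ultimately show ?thesis
    using f reindex unfolding admissible_scf_def by blast
qed

locale rich_domain = pref_domain +
  assumes minimally_rich: "minimally_rich A D"
begin

lemma exists_pref_other_top: "\<exists>P\<in>D. P ! 0 \<noteq> x"
proof -
  have "\<not> A \<subseteq> {x}"
    using card_A card_mono[of "{x}" A] by auto
  then obtain b where "b \<in> A" "b \<noteq> x"
    by blast
  then show ?thesis
    using minimally_rich unfolding minimally_rich_def top_alt_def by metis
qed

definition diagonal_dictator :: "nat \<Rightarrow> ('a list list \<Rightarrow> 'a) \<Rightarrow> nat \<Rightarrow> nat \<Rightarrow> nat \<Rightarrow> bool" where
  "diagonal_dictator m f p q j \<longleftrightarrow>
    (\<forall>Ps\<in>profiles D m. Ps ! p = Ps ! q \<longrightarrow> f Ps = top_alt (Ps ! j))"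

lemma diagonal_dictator_sym: "diagonal_dictator m f p q p \<Longrightarrow> diagonal_dictator m f q p q"
  unfolding diagonal_dictator_def by auto

definition pair_dictator :: "('a list list \<Rightarrow> 'a) \<Rightarrow> nat \<Rightarrow> nat \<Rightarrow> 'a list list \<Rightarrow> bool" where
  "pair_dictator f p q Bs \<longleftrightarrow> (\<forall>P1\<in>D. \<forall>P2\<in>D. f (Bs[p := P1, q := P2]) = P1 ! 0)"

lemma two_voter_restriction:
  assumes f: "admissible_scf A D m f" and pq: "p < m" "q < m" "p \<noteq> q"
    and diag: "diagonal_dictator m f p q p" and Bs: "Bs \<in> profiles D m"
  shows "two_voter_scf A D (\<lambda>P1 P2. f (Bs[p := P1, q := P2]))"
proof (intro two_voter_scf.intro[OF pref_domain_axioms] two_voter_scf_axioms.intro)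
  have Bs_upd: "Bs[p := P1, q := P2] \<in> profiles D m" if "P1 \<in> D" "P2 \<in> D" for P1 P2
    using profiles_update Bs that by blast
  have nth_p: "Bs[p := P1, q := P2] ! p = P1" and nth_q: "Bs[p := P1, q := P2] ! q = P2" for P1 P2
    using pq length_profiles[OF Bs] by (simp_all add: nth_list_update)
  have sp: "\<not> prefers (Ps ! i) (f (Ps[i := P'])) (f Ps)"
    if "Ps \<in> profiles D m" "i < m" "P' \<in> D" for Ps i P'
    using f that unfolding admissible_scf_def strategy_proof_def by blast
  show "f (Bs[p := P1, q := P2]) \<in> A" if "P1 \<in> D" "P2 \<in> D" for P1 P2
    using f Bs_upd[OF that] unfolding admissible_scf_def by blast
  show "f (Bs[p := P, q := P]) = P ! 0" if "P \<in> D" for P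
    using diag Bs_upd[OF that that] nth_p nth_q
    unfolding diagonal_dictator_def top_alt_def by metis
  show "\<not> prefers P1 (f (Bs[p := P1', q := P2])) (f (Bs[p := P1, q := P2]))"
    if "P1 \<in> D" "P1' \<in> D" "P2 \<in> D" for P1 P1' P2
    using sp[OF Bs_upd[OF that(1,3)] pq(1) that(2)] nth_p pq(3)
    by (simp add: list_update_swap)
  show "\<not> prefers P2 (f (Bs[p := P1, q := P2'])) (f (Bs[p := P1, q := P2]))"
    if "P1 \<in> D" "P2 \<in> D" "P2' \<in> D" for P1 P2 P2'
    using sp[OF Bs_upd[OF that(1,2)] pq(2) that(3)] nth_q by simp
qed

lemma pair_dictator_cases:
  assumes "admissible_scf A D m f" "p < m" "q < m" "p \<noteq> q"
    and "diagonal_dictator m f p q p" and "Bs \<in> profiles D m"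
  shows "pair_dictator f p q Bs \<or> pair_dictator f q p Bs"
proof -
  have "Bs[q := P1, p := P2] = Bs[p := P2, q := P1]" for P1 P2
    using \<open>p \<noteq> q\<close> by (simp add: list_update_swap)
  then show ?thesis
    using two_voter_scf.two_voter_dictator[OF two_voter_restriction[OF assms]]
    unfolding pair_dictator_def by auto
qed

lemma pair_dictator_flip_impossible:
  assumes f: "admissible_scf A D m f" and Bs: "Bs \<in> profiles D m" and Q: "Q \<in> D"
    and i: "i < m" "i \<noteq> p" "i \<noteq> q" and pq: "p < m" "q < m" "p \<noteq> q"
    and "pair_dictator f p q Bs"
  shows "\<not> pair_dictator f q p (Bs[i := Q])"
proof
  assume "pair_dictator f q p (Bs[i := Q])"
  obtain P2 where P2: "P2 \<in> D" "P2 ! 0 \<noteq> Q ! 0"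
    using exists_pref_other_top by blast
  define Xs where "Xs = Bs[i := Q, q := P2, p := Q]"
  have Xs: "Xs \<in> profiles D m"
    unfolding Xs_def by (intro profiles_update Bs Q P2)
  have "f Xs = P2 ! 0"
    using \<open>pair_dictator f q p (Bs[i := Q])\<close> P2(1) Q unfolding pair_dictator_def Xs_def by blast
  moreover have "Xs[i := Bs ! i] = Bs[p := Q, q := P2]"
    using i pq length_profiles[OF Bs]
    by (auto simp: Xs_def nth_list_update intro!: nth_equalityI)
  then have "f (Xs[i := Bs ! i]) = Q ! 0"
    using \<open>pair_dictator f p q Bs\<close> P2(1) Q unfolding pair_dictator_def by simp
  moreover have "Xs ! i = Q"
    using i length_profiles[OF Bs] by (simp add: Xs_def nth_list_update)
  ultimately have "weakly_prefers Q (P2 ! 0) (Q ! 0)"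
    using admissible_sp_weak[OF domain f Xs i(1) profiles_nth[OF Bs i(1)]] by simp
  then show False
    using weakly_prefers_top[OF distinct_pref[OF Q]] P2(2) by blast
qed

lemma pair_dictator_update:
  assumes f: "admissible_scf A D m f" and pq: "p < m" "q < m" "p \<noteq> q"
    and diag: "diagonal_dictator m f p q p"
    and Bs: "Bs \<in> profiles D m" and i: "i < m" and Q: "Q \<in> D"
    and "pair_dictator f p q Bs"
  shows "pair_dictator f p q (Bs[i := Q])"
proof (cases "i = p \<or> i = q")
  case True
  then have "(Bs[i := Q])[p := P1, q := P2] = Bs[p := P1, q := P2]" for P1 P2
    using pq by (auto simp: list_update_swap)
  then show ?thesis
    using \<open>pair_dictator f p q Bs\<close> unfolding pair_dictator_def by simp
next
  case False
  then show ?thesis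
    using pair_dictator_cases[OF f pq diag profiles_update[OF Bs Q]]
      pair_dictator_flip_impossible[OF f Bs Q i] pq \<open>pair_dictator f p q Bs\<close> by blast
qed

lemma dictator_if_pair_dictator:
  assumes f: "admissible_scf A D m f" and pq: "p < m" "q < m" "p \<noteq> q"
    and diag: "diagonal_dictator m f p q p"
    and Bs: "Bs \<in> profiles D m" and "pair_dictator f p q Bs"
  shows "\<forall>Ps\<in>profiles D m. f Ps = top_alt (Ps ! p)"
proof
  fix Ps
  assume Ps: "Ps \<in> profiles D m"
  have "pair_dictator f p q Ps"
    using profiles_update_induct[OF Bs Ps, of "pair_dictator f p q"]
      pair_dictator_update[OF f pq diag] \<open>pair_dictator f p q Bs\<close> by blast
  then have "f (Ps[p := Ps ! p, q := Ps ! q]) = Ps ! p ! 0"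
    using profiles_nth[OF Ps] pq unfolding pair_dictator_def by blast
  then show "f Ps = top_alt (Ps ! p)"
    by (simp add: top_alt_def)
qed

lemma dictatorial_if_diagonal_dictator:
  assumes f: "admissible_scf A D m f" and pq: "p < m" "q < m" "p \<noteq> q"
    and diag: "diagonal_dictator m f p q p"
  shows "dictatorial D m f"
proof -
  obtain P where "P \<in> D"
    using exists_pref_other_top by blast
  then have Bs: "replicate m P \<in> profiles D m"
    by (rule replicate_profiles)
  from pair_dictator_cases[OF f pq diag Bs]
  have "(\<forall>Ps\<in>profiles D m. f Ps = top_alt (Ps ! p)) \<or> (\<forall>Ps\<in>profiles D m. f Ps = top_alt (Ps ! q))"
    using dictator_if_pair_dictator[OF f pq diag Bs]
      dictator_if_pair_dictator[OF f pq(2,1) pq(3)[symmetric] diagonal_dictator_sym[OF diag] Bs]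
    by blast
  then show ?thesis
    unfolding dictatorial_def using pq by blast
qed

lemma merge_voters:
  assumes IH: "\<forall>g. admissible_scf A D n g \<longrightarrow> dictatorial D n g"
    and f: "admissible_scf A D (Suc n) f" and pq: "p < Suc n" "q < Suc n" "p \<noteq> q"
  obtains j where "j < Suc n" "j \<noteq> q" "diagonal_dictator (Suc n) f p q j"
proof -
  \<comment> \<open>voter q of f copies voter p; voter l of the merged rule is voter ins l of f\<close>
  define del where "del i = (if i < q then i else i - 1)" for i :: nat
  define ins where "ins l = (if l < q then l else Suc l)" for l :: nat
  define merge where "merge i = (if i = q then del p else del i)" for i
  have merge_less: "\<forall>i<Suc n. merge i < n"
    using pq by (auto simp: merge_def del_def)
  have ins_merge: "ins (merge i) = (if i = q then p else i)" if "i < Suc n" for i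
    using pq that by (auto simp: merge_def del_def ins_def)
  obtain l where "l < n"
    and dict: "\<forall>Qs\<in>profiles D n. f (map (\<lambda>i. Qs ! merge i) [0..<Suc n]) = top_alt (Qs ! l)"
    using IH admissible_scf_reindex[OF domain f merge_less] unfolding dictatorial_def by blast
  show thesis
  proof (rule that[of "ins l"])
    show "ins l < Suc n" "ins l \<noteq> q"
      using \<open>l < n\<close> by (auto simp: ins_def)
    show "diagonal_dictator (Suc n) f p q (ins l)"
      unfolding diagonal_dictator_def
    proof (intro ballI impI)
      fix Ps
      assume Ps: "Ps \<in> profiles D (Suc n)" and diag: "Ps ! p = Ps ! q"
      define Qs where "Qs = map (\<lambda>l. Ps ! ins l) [0..<n]"
      have Qs: "Qs \<in> profiles D n"
        using profiles_nth[OF Ps] by (auto simp: Qs_def profiles_def ins_def)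
      have "map (\<lambda>i. Qs ! merge i) [0..<Suc n] = Ps"
      proof (rule nth_equalityI)
        show "length (map (\<lambda>i. Qs ! merge i) [0..<Suc n]) = length Ps"
          using length_profiles[OF Ps] by (simp del: upt_Suc)
        fix i
        assume "i < length (map (\<lambda>i. Qs ! merge i) [0..<Suc n])"
        then have i: "i < Suc n"
          by (simp del: upt_Suc)
        then have "map (\<lambda>i. Qs ! merge i) [0..<Suc n] ! i = Ps ! ins (merge i)"
          using merge_less by (simp add: Qs_def del: upt_Suc)
        then show "map (\<lambda>i. Qs ! merge i) [0..<Suc n] ! i = Ps ! i"
          using ins_merge[OF i] diag by simp
      qed
      then show "f Ps = top_alt (Ps ! ins l)"
        using dict Qs \<open>l < n\<close> by (metis Qs_def diff_zero length_upt nth_map nth_upt add_0)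
    qed
  qed
qed

lemma diagonal_dictators_conflict:
  assumes f: "admissible_scf A D m f" and idx: "p < m" "q < m" "j < m" "r < m"
    and ne: "p \<noteq> q" "j \<noteq> p" "j \<noteq> q" "r \<noteq> p" "r \<noteq> j"
    and diag_q: "diagonal_dictator m f p q j" and diag_j: "diagonal_dictator m f p j r"
  shows False
proof -
  obtain P where P: "P \<in> D"
    using exists_pref_other_top by blast
  obtain P' where P': "P' \<in> D" "P' ! 0 \<noteq> P ! 0"
    using exists_pref_other_top by blast
  have R: "replicate m P \<in> profiles D m"
    using P by (rule replicate_profiles)
  show False
  proof (cases "r = q")
    case True
    define Ps where "Ps = (replicate m P)[j := P']"
    have Ps: "Ps \<in> profiles D m" "Ps[p := P'] \<in> profiles D m"
      unfolding Ps_def by (intro profiles_update R P'(1))+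
    have "Ps ! p = P" "Ps ! q = P" "Ps ! j = P'"
      using idx ne by (simp_all add: Ps_def nth_list_update)
    then have "f Ps = P' ! 0"
      using diag_q Ps(1) unfolding diagonal_dictator_def top_alt_def by simp
    moreover have "Ps[p := P'] ! p = P'" "Ps[p := P'] ! j = P'" "Ps[p := P'] ! q = P"
      using idx ne by (simp_all add: Ps_def nth_list_update)
    then have "f (Ps[p := P']) = P ! 0"
      using diag_j Ps(2) True unfolding diagonal_dictator_def top_alt_def by simp
    moreover have "weakly_prefers P (f Ps) (f (Ps[p := P']))"
      using admissible_sp_weak[OF domain f Ps(1) idx(1) P'(1)] \<open>Ps ! p = P\<close> by simp
    ultimately show False
      using weakly_prefers_top[OF distinct_pref[OF P]] P'(2) by simp
  next
    case False
    define Ps where "Ps = (replicate m P)[r := P']"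
    have Ps: "Ps \<in> profiles D m"
      unfolding Ps_def by (rule profiles_update[OF R P'(1)])
    have nth: "Ps ! p = P" "Ps ! q = P" "Ps ! j = P" "Ps ! r = P'"
      using idx False ne by (simp_all add: Ps_def nth_list_update)
    have "f Ps = P ! 0"
      using Ps diag_q nth unfolding diagonal_dictator_def top_alt_def by simp
    moreover have "f Ps = P' ! 0"
      using Ps diag_j nth unfolding diagonal_dictator_def top_alt_def by simp
    ultimately show False
      using P'(2) by simp
  qed
qed

lemma diagonal_dictator_two_voters:
  assumes "admissible_scf A D 2 f"
  shows "diagonal_dictator 2 f 0 1 0"
  unfolding diagonal_dictator_def
proof (intro ballI impI)
  fix Ps
  assume "Ps \<in> profiles D 2" "Ps ! 0 = Ps ! 1"
  moreover from this have "\<forall>i<2. top_alt (Ps ! i) = top_alt (Ps ! 0)"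
    by (auto simp: less_2_cases_iff)
  ultimately show "f Ps = top_alt (Ps ! 0)"
    using assms unfolding admissible_scf_def unanimous_def by blast
qed

theorem dictatorial_if_admissible:
  assumes "2 \<le> n" and "admissible_scf A D n f"
  shows "dictatorial D n f"
  using assms
proof (induction n arbitrary: f rule: nat_induct_at_least)
  case base
  then show ?case
    using dictatorial_if_diagonal_dictator[OF base.prems, of 0 1]
      diagonal_dictator_two_voters by simp
next
  case (Suc n)
  have IH: "\<forall>g. admissible_scf A D n g \<longrightarrow> dictatorial D n g"
    using Suc.IH by blast
  obtain j where j: "j < Suc n" "j \<noteq> 1" "diagonal_dictator (Suc n) f 0 1 j"
    using merge_voters[OF IH Suc.prems, of 0 1] Suc.hyps by auto
  show ?case
  proof (cases "j = 0")
    case True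
    then show ?thesis
      using dictatorial_if_diagonal_dictator[OF Suc.prems, of 0 1] j Suc.hyps by simp
  next
    case False
    obtain r where r: "r < Suc n" "r \<noteq> j" "diagonal_dictator (Suc n) f 0 j r"
      using merge_voters[OF IH Suc.prems, of 0 j] j False by auto
    show ?thesis
    proof (cases "r = 0")
      case True
      then show ?thesis
        using dictatorial_if_diagonal_dictator[OF Suc.prems, of 0 j] j r False by simp
    next
      case False
      then show ?thesis
        using diagonal_dictators_conflict[OF Suc.prems, of 0 1 j r] j r Suc.hyps \<open>j \<noteq> 0\<close> by simp
    qed
  qed
qed

end

theorem theorem3:
  fixes A :: "'a set" and D :: "'a list set" and n :: nat
    and f :: "'a list list \<Rightarrow> 'a"
  assumes "finite A" and "card A \<ge> 3" and "n \<ge> 2"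
    and "is_domain A D" and "minimally_rich A D"
    and "connected_two_neighbours D"
    and "\<forall>Ps\<in>profiles D n. f Ps \<in> A"
    and "unanimous D n f" and "strategy_proof D n f"
  shows "dictatorial D n f"
proof -
  interpret rich_domain A D
    by unfold_locales (use assms in auto)
  have "admissible_scf A D n f"
    unfolding admissible_scf_def using assms(7-9) by blast
  then show ?thesis
    using dictatorial_if_admissible assms(3) by blast
qed

end
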